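(* Let $C\subseteq[n]$ be a nonempty proper subset and let $\ket{\psi}=\ket{a}_C\otimes\ket{b}_{\overline{C}}$ be an $n$-qubit state, where $\ket{a}_C$ and $\ket{b}_{\overline{C}}$ are each $\epsilon$-far from every multipartite product state. There is an algorithm (not necessarily time-efficient) which, given $m=O(n/\epsilon^2)$ copies of $\ket{\psi}$, identifies the cut $C$ (i.e. outputs $C$ or $\overline{C}$) with probability at least $99\%$.
   Context: A state on a set $Q$ of qubits is multipartite product if it equals $\ket{a'}_D\otimes\ket{b'}_{Q\setminus D}$ for some nonempty proper $D\subsetneq Q$; a pure state $\ket{\phi}$ is $\epsilon$-far from a set $\mathcal{P}$ if $|\langle\phi|\chi\rangle|^2\le1-\epsilon^2$ for all $\ket{\chi}\in\mathcal{P}$. $\overline{C}=[n]\setminus C$. *)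

theory Defs
  imports "HOL-Analysis.Analysis"
begin

text \<open>The computational basis of Q is
indexed by subsets x of Q (x = set of qubits in state 1). A state is a function
from basis labels to amplitudes; only its values on Pow Q matter.\<close>

definition qinner :: "nat set \<Rightarrow> (nat set \<Rightarrow> complex) \<Rightarrow> (nat set \<Rightarrow> complex) \<Rightarrow> complex" where
  "qinner Q \<phi> \<xi> = (\<Sum>x\<in>Pow Q. cnj (\<phi> x) * \<xi> x)"

definition qstate :: "nat set \<Rightarrow> (nat set \<Rightarrow> complex) \<Rightarrow> bool" where
  "qstate Q \<phi> \<longleftrightarrow> (\<Sum>x\<in>Pow Q. (cmod (\<phi> x))\<^sup>2) = 1"

definition qtensor :: "nat set \<Rightarrow> nat set \<Rightarrow> (nat set \<Rightarrow> complex) \<Rightarrow> (nat set \<Rightarrow> complex) \<Rightarrow> (nat set \<Rightarrow> complex)" where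
  "qtensor D E a b = (\<lambda>x. a (x \<inter> D) * b (x \<inter> E))"

definition mp_product :: "nat set \<Rightarrow> (nat set \<Rightarrow> complex) \<Rightarrow> bool" where
  "mp_product Q \<xi> \<longleftrightarrow> (\<exists>D a' b'. D \<noteq> {} \<and> D \<subset> Q \<and> qstate D a' \<and> qstate (Q - D) b' \<and>
      (\<forall>x\<in>Pow Q. \<xi> x = qtensor D (Q - D) a' b' x))"

definition eps_far_mp :: "nat set \<Rightarrow> real \<Rightarrow> (nat set \<Rightarrow> complex) \<Rightarrow> bool" where
  "eps_far_mp Q \<epsilon> \<phi> \<longleftrightarrow> (\<forall>\<xi>. qstate Q \<xi> \<and> mp_product Q \<xi> \<longrightarrow> (cmod (qinner Q \<phi> \<xi>))\<^sup>2 \<le> 1 - \<epsilon>\<^sup>2)"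

definition copies_basis :: "nat \<Rightarrow> nat \<Rightarrow> nat set list set" where
  "copies_basis n m = {xs. length xs = m \<and> set xs \<subseteq> Pow {..<n}}"

definition tensor_pow :: "(nat set \<Rightarrow> complex) \<Rightarrow> nat set list \<Rightarrow> complex" where
  "tensor_pow \<psi> xs = prod_list (map \<psi> xs)"

definition qform :: "'b set \<Rightarrow> ('b \<Rightarrow> 'b \<Rightarrow> complex) \<Rightarrow> ('b \<Rightarrow> complex) \<Rightarrow> complex" where
  "qform B M v = (\<Sum>x\<in>B. \<Sum>y\<in>B. cnj (v x) * M x y * v y)"

definition psd_op :: "'b set \<Rightarrow> ('b \<Rightarrow> 'b \<Rightarrow> complex) \<Rightarrow> bool" where
  "psd_op B M \<longleftrightarrow> (\<forall>v. Im (qform B M v) = 0 \<and> 0 \<le> Re (qform B M v))"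

definition is_povm :: "'b set \<Rightarrow> 'oc set \<Rightarrow> ('oc \<Rightarrow> 'b \<Rightarrow> 'b \<Rightarrow> complex) \<Rightarrow> bool" where
  "is_povm B Out M \<longleftrightarrow> (\<forall>oc\<in>Out. psd_op B (M oc)) \<and>
     (\<forall>x\<in>B. \<forall>y\<in>B. (\<Sum>oc\<in>Out. M oc x y) = (if x = y then 1 else 0))"

end

theory Submission
  imports Defs
begin

text \<open>Pair up the copies and measure every qubit pair in the eigenbasis of the two-qubit swap.
  For a set \<open>S\<close> of qubits, the product of the swap eigenvalues on \<open>S\<close> is the outcome of a swap
  test on \<open>S\<close>, which passes with probability \<open>(1 + tr \<rho>\<^sub>S\<^sup>2)/2\<close>. For \<open>\<psi> = a\<^sub>C \<otimes> b\<^sub>N\<^sub>-\<^sub>C\<close> this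
  probability is \<open>1\<close> for \<open>S = C\<close>, while any other nonempty proper \<open>S\<close> cuts through \<open>C\<close> or \<open>N - C\<close>;
  the purity of a reduced state is bounded by the best squared overlap with a product state,
  so \<open>\<epsilon>\<close>-farness gives \<open>tr \<rho>\<^sub>S\<^sup>2 \<le> 1 - \<epsilon>\<^sup>2\<close>. Outputting any nonempty proper cut that passed all
  \<open>m div 2\<close> tests fails only if a wrong cut passes them all, which by a union bound over \<open>2\<^sup>n\<close> cuts
  has probability at most \<open>2\<^sup>n (1 - \<epsilon>\<^sup>2/2)\<^bsup>m div 2\<^esup> \<le> 1/100\<close> once \<open>m \<ge> 800 n / \<epsilon>\<^sup>2\<close>.\<close>

lemma sum_Pow_split:
  assumes "finite Q" "T \<subseteq> Q"
  shows "(\<Sum>x\<in>Pow Q. f x) = (\<Sum>u\<in>Pow T. \<Sum>w\<in>Pow (Q - T). f (u \<union> w))"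
proof -
  have "bij_betw (\<lambda>(u, w). u \<union> w) (Pow T \<times> Pow (Q - T)) (Pow Q)"
  proof (rule bij_betw_imageI)
    show "inj_on (\<lambda>(u, w). u \<union> w) (Pow T \<times> Pow (Q - T))"
      by (rule inj_onI, clarify) blast
    show "(\<lambda>(u, w). u \<union> w) ` (Pow T \<times> Pow (Q - T)) = Pow Q"
    proof
      show "Pow Q \<subseteq> (\<lambda>(u, w). u \<union> w) ` (Pow T \<times> Pow (Q - T))"
      proof
        fix x assume "x \<in> Pow Q"
        then show "x \<in> (\<lambda>(u, w). u \<union> w) ` (Pow T \<times> Pow (Q - T))"
          by (intro image_eqI[of _ _ "(x \<inter> T, x - T)"]) auto
      qed
    qed (use assms in auto)
  qed
  then have "(\<Sum>x\<in>Pow Q. f x) = (\<Sum>(u, w)\<in>Pow T \<times> Pow (Q - T). f (u \<union> w))"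
    by (simp add: sum.reindex_bij_betw[where g = f, symmetric] case_prod_unfold)
  also have "\<dots> = (\<Sum>u\<in>Pow T. \<Sum>w\<in>Pow (Q - T). f (u \<union> w))"
    by (rule sum.cartesian_product[symmetric])
  finally show ?thesis .
qed

lemma Int_Un_parts:
  assumes "u \<in> Pow T" "w \<in> Pow (Q - T)"
  shows "(u \<union> w) \<inter> T = u" "(u \<union> w) \<inter> (Q - T) = w"
  using assms by auto

lemma sum_Pow_prod_mem:
  fixes h :: "'a \<Rightarrow> bool \<Rightarrow> 'b::comm_semiring_1"
  assumes "finite A"
  shows "(\<Sum>T\<in>Pow A. \<Prod>j\<in>A. h j (j \<in> T)) = (\<Prod>j\<in>A. h j False + h j True)"
proof -
  have split: "(\<Prod>j\<in>A. h j (j \<in> T)) = (\<Prod>j\<in>T. h j True) * (\<Prod>j\<in>A - T. h j False)"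
    if "T \<subseteq> A" for T
  proof -
    have "(\<Prod>j\<in>A. h j (j \<in> T)) = (\<Prod>j\<in>A - T. h j (j \<in> T)) * (\<Prod>j\<in>T. h j (j \<in> T))"
      by (rule prod.subset_diff[OF that assms])
    also have "\<dots> = (\<Prod>j\<in>A - T. h j False) * (\<Prod>j\<in>T. h j True)"
      by (intro arg_cong2[where f = "(*)"] prod.cong) auto
    finally show ?thesis by (simp add: mult.commute)
  qed
  have "(\<Prod>j\<in>A. h j False + h j True) = (\<Prod>j\<in>A. h j True + h j False)"
    by (simp add: add.commute)
  also have "\<dots> = (\<Sum>T\<in>Pow A. (\<Prod>j\<in>T. h j True) * (\<Prod>j\<in>A - T. h j False))"
    by (rule prod_add[OF assms])
  also have "\<dots> = (\<Sum>T\<in>Pow A. \<Prod>j\<in>A. h j (j \<in> T))"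
    by (intro sum.cong refl) (simp add: split)
  finally show ?thesis ..
qed

lemma prod_indicator:
  assumes "finite A"
  shows "(\<Prod>j\<in>A. if P j then 1 else 0 :: 'b::comm_semiring_1) = (if \<forall>j\<in>A. P j then 1 else 0)"
  using assms by (induction A rule: finite_induct) auto

lemma cmod_sum_mult_squared_le:
  "(cmod (\<Sum>i\<in>I. f i * g i))\<^sup>2 \<le> (\<Sum>i\<in>I. (cmod (f i))\<^sup>2) * (\<Sum>i\<in>I. (cmod (g i))\<^sup>2)"
proof -
  have "cmod (\<Sum>i\<in>I. f i * g i) \<le> (\<Sum>i\<in>I. cmod (f i) * cmod (g i))"
    by (metis (no_types, lifting) norm_mult norm_sum sum.cong)
  then have "(cmod (\<Sum>i\<in>I. f i * g i))\<^sup>2 \<le> (\<Sum>i\<in>I. cmod (f i) * cmod (g i))\<^sup>2"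
    by (simp add: power_mono)
  also have "\<dots> \<le> (\<Sum>i\<in>I. (cmod (f i))\<^sup>2) * (\<Sum>i\<in>I. (cmod (g i))\<^sup>2)"
    by (rule Cauchy_Schwarz_ineq_sum)
  finally show ?thesis .
qed

lemma sum_rotate3:
  "(\<Sum>a\<in>A. \<Sum>b\<in>B. \<Sum>c\<in>C. f a b c) = (\<Sum>c\<in>C. \<Sum>a\<in>A. \<Sum>b\<in>B. f a b c)"
proof -
  have "(\<Sum>a\<in>A. \<Sum>b\<in>B. \<Sum>c\<in>C. f a b c) = (\<Sum>a\<in>A. \<Sum>c\<in>C. \<Sum>b\<in>B. f a b c)"
    by (intro sum.cong refl sum.swap)
  also have "\<dots> = (\<Sum>c\<in>C. \<Sum>a\<in>A. \<Sum>b\<in>B. f a b c)"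
    by (rule sum.swap)
  finally show ?thesis .
qed

lemma sum_delta2:
  assumes "finite A" "finite B" "a \<in> A" "b \<in> B"
  shows "(\<Sum>x\<in>A. \<Sum>y\<in>B. if x = a \<and> y = b then f x y else 0) = f a b"
proof -
  have "(\<Sum>x\<in>A. \<Sum>y\<in>B. if x = a \<and> y = b then f x y else 0) = (\<Sum>x\<in>A. if x = a then f x b else 0)"
    using assms by (intro sum.cong refl) (auto simp: sum.delta')
  also have "\<dots> = f a b"
    using assms by (simp add: sum.delta')
  finally show ?thesis .
qed

lemma union_bound:
  fixes p :: "'a \<Rightarrow> real"
  assumes "finite A" "finite W" "\<And>x. x \<in> A \<Longrightarrow> 0 \<le> p x"
    and "\<And>x. x \<in> A \<Longrightarrow> good x \<or> \<not> Q x \<or> (\<exists>S\<in>W. R S x)"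
  shows "(\<Sum>x\<in>A. p x) \<le> (\<Sum>x\<in>A. if good x then p x else 0) + (\<Sum>x\<in>A. if Q x then 0 else p x)
    + (\<Sum>S\<in>W. \<Sum>x\<in>A. if R S x then p x else 0)"
proof -
  have "p x \<le> (if good x then p x else 0) + (if Q x then 0 else p x)
      + (\<Sum>S\<in>W. if R S x then p x else 0)" if x: "x \<in> A" for x
  proof -
    have nonneg: "0 \<le> (\<Sum>S\<in>W. if R S x then p x else 0)"
      using assms(3)[OF x] by (simp add: sum_nonneg)
    consider "good x" | "\<not> Q x" | S where "S \<in> W" "R S x"
      using assms(4)[OF x] by blast
    then show ?thesis
    proof cases
      case 3
      then have "p x \<le> (\<Sum>S\<in>W. if R S x then p x else 0)"
        using member_le_sum[of S W "\<lambda>S. if R S x then p x else 0"] assms(2,3) x by simp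
      then show ?thesis using assms(3)[OF x] by simp
    qed (use nonneg assms(3)[OF x] in auto)
  qed
  then have "(\<Sum>x\<in>A. p x) \<le> (\<Sum>x\<in>A. (if good x then p x else 0) + (if Q x then 0 else p x)
      + (\<Sum>S\<in>W. if R S x then p x else 0))"
    by (rule sum_mono)
  also have "\<dots> = (\<Sum>x\<in>A. if good x then p x else 0) + (\<Sum>x\<in>A. if Q x then 0 else p x)
      + (\<Sum>S\<in>W. \<Sum>x\<in>A. if R S x then p x else 0)"
    by (simp add: sum.distrib sum.swap[of _ W])
  finally show ?thesis .
qed

lemma of_real_cmod_squared: "complex_of_real ((cmod z)\<^sup>2) = cnj z * z"
  by (metis complex_norm_square mult.commute)

section \<open>Product states and purity\<close>

lemma qstate_qtensor:
  assumes "finite Q" "T \<subseteq> Q" "qstate T a" "qstate (Q - T) b"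
  shows "qstate Q (qtensor T (Q - T) a b)"
proof -
  have "(\<Sum>x\<in>Pow Q. (cmod (qtensor T (Q - T) a b x))\<^sup>2)
      = (\<Sum>u\<in>Pow T. (cmod (a u))\<^sup>2) * (\<Sum>w\<in>Pow (Q - T). (cmod (b w))\<^sup>2)"
    by (simp add: sum_Pow_split[OF assms(1,2)] qtensor_def Int_Un_parts norm_mult
        power_mult_distrib sum_product)
  then show ?thesis
    using assms(3,4) unfolding qstate_def by simp
qed

lemma qstate_normalize:
  assumes "0 < (\<Sum>x\<in>Pow Q. (cmod (f x))\<^sup>2)"
  shows "qstate Q (\<lambda>x. f x / of_real (sqrt (\<Sum>x\<in>Pow Q. (cmod (f x))\<^sup>2)))"
  using assms unfolding qstate_def
  by (simp add: norm_divide power_divide sum_divide_distrib[symmetric])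

text \<open>The vector on \<open>T\<close> obtained by contracting \<open>\<langle>a|\<close> with \<open>|c\<rangle>\<close> on the qubits \<open>Q - T\<close>.\<close>
definition partial_overlap ::
    "nat set \<Rightarrow> nat set \<Rightarrow> (nat set \<Rightarrow> complex) \<Rightarrow> (nat set \<Rightarrow> complex) \<Rightarrow> nat set \<Rightarrow> complex" where
  "partial_overlap Q T a c u = (\<Sum>w\<in>Pow (Q - T). cnj (a (u \<union> w)) * c w)"

lemma qinner_qtensor:
  assumes "finite Q" "T \<subseteq> Q"
  shows "qinner Q a (qtensor T (Q - T) \<phi> c) = (\<Sum>u\<in>Pow T. \<phi> u * partial_overlap Q T a c u)"
  unfolding qinner_def partial_overlap_def
  by (simp add: sum_Pow_split[OF assms] qtensor_def Int_Un_parts sum_distrib_left mult_ac)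

lemma partial_overlap_norm_le:
  assumes "finite Q" "T \<subseteq> Q" "qstate Q a"
  shows "(\<Sum>u\<in>Pow T. (cmod (partial_overlap Q T a c u))\<^sup>2) \<le> (\<Sum>w\<in>Pow (Q - T). (cmod (c w))\<^sup>2)"
proof -
  have "(\<Sum>u\<in>Pow T. (cmod (partial_overlap Q T a c u))\<^sup>2)
      \<le> (\<Sum>u\<in>Pow T. (\<Sum>w\<in>Pow (Q - T). (cmod (a (u \<union> w)))\<^sup>2) * (\<Sum>w\<in>Pow (Q - T). (cmod (c w))\<^sup>2))"
    unfolding partial_overlap_def
    using cmod_sum_mult_squared_le[of "\<lambda>w. cnj (a (_ \<union> w))"] by (intro sum_mono) simp
  also have "\<dots> = (\<Sum>x\<in>Pow Q. (cmod (a x))\<^sup>2) * (\<Sum>w\<in>Pow (Q - T). (cmod (c w))\<^sup>2)"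
    by (simp add: sum_Pow_split[OF assms(1,2)] sum_distrib_right)
  finally show ?thesis
    using assms(3) unfolding qstate_def by simp
qed

text \<open>The normalised partial overlap and \<open>c\<close> form a product state across \<open>T\<close> whose squared overlap
  with \<open>a\<close> is exactly the ratio of the squared norms of \<open>partial_overlap Q T a c\<close> and \<open>c\<close>.\<close>
lemma partial_overlap_product_witness:
  assumes Q: "finite Q" "T \<noteq> {}" "T \<subset> Q"
    and G: "0 < (\<Sum>u\<in>Pow T. (cmod (partial_overlap Q T a c u))\<^sup>2)" (is "0 < ?G")
    and X: "0 < (\<Sum>w\<in>Pow (Q - T). (cmod (c w))\<^sup>2)" (is "0 < ?X")
  obtains \<xi> where "qstate Q \<xi>" "mp_product Q \<xi>" "(cmod (qinner Q a \<xi>))\<^sup>2 = ?G / ?X"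
proof -
  have TQ: "T \<subseteq> Q" using Q by auto
  define g where "g = partial_overlap Q T a c"
  define \<phi> where "\<phi> = (\<lambda>u. cnj (g u) / of_real (sqrt ?G))"
  define \<gamma> where "\<gamma> = (\<lambda>w. c w / of_real (sqrt ?X))"
  define \<xi> where "\<xi> = qtensor T (Q - T) \<phi> \<gamma>"
  have "qstate T \<phi>"
    using qstate_normalize[where Q = T and f = "\<lambda>u. cnj (g u)"] G by (simp add: \<phi>_def g_def)
  moreover have "qstate (Q - T) \<gamma>"
    using qstate_normalize[where Q = "Q - T" and f = c] X by (simp add: \<gamma>_def)
  ultimately have "qstate Q \<xi>" "mp_product Q \<xi>"
    using Q qstate_qtensor[OF Q(1) TQ] unfolding \<xi>_def mp_product_def by blast+
  moreover have "(cmod (qinner Q a \<xi>))\<^sup>2 = ?G / ?X"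
  proof -
    have "partial_overlap Q T a \<gamma> u = g u / of_real (sqrt ?X)" for u
      by (simp add: g_def \<gamma>_def partial_overlap_def sum_divide_distrib)
    then have "qinner Q a \<xi> = (\<Sum>u\<in>Pow T. cnj (g u) * g u) / of_real (sqrt ?G * sqrt ?X)"
      by (simp add: \<xi>_def qinner_qtensor[OF Q(1) TQ] \<phi>_def sum_divide_distrib)
    also have "\<dots> = of_real (?G / (sqrt ?G * sqrt ?X))"
      unfolding g_def of_real_divide of_real_sum by (simp only: of_real_cmod_squared)
    finally have "cmod (qinner Q a \<xi>) = ?G / (sqrt ?G * sqrt ?X)"
      using G X by (simp only: norm_of_real) simp
    also have "\<dots> = sqrt (?G / ?X)"
      using G by (simp add: real_sqrt_divide real_div_sqrt divide_divide_eq_left[symmetric])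
    finally show ?thesis
      using G X by simp
  qed
  ultimately show ?thesis
    by (rule that)
qed

lemma partial_overlap_norm_le_far:
  assumes Q: "finite Q" "T \<noteq> {}" "T \<subset> Q" and far: "eps_far_mp Q \<epsilon> a" and \<epsilon>: "\<epsilon>\<^sup>2 \<le> 1"
  shows "(\<Sum>u\<in>Pow T. (cmod (partial_overlap Q T a c u))\<^sup>2)
      \<le> (1 - \<epsilon>\<^sup>2) * (\<Sum>w\<in>Pow (Q - T). (cmod (c w))\<^sup>2)"
    (is "?G \<le> (1 - \<epsilon>\<^sup>2) * ?X")
proof (cases "?G = 0")
  case True
  then show ?thesis using \<epsilon> by (simp add: sum_nonneg)
next
  case False
  then have G: "0 < ?G"
    by (simp add: order_le_neq_trans sum_nonneg)
  have X: "0 < ?X"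
  proof (rule ccontr)
    assume "\<not> 0 < ?X"
    then have "?X = 0"
      by (simp add: antisym sum_nonneg)
    then have "\<forall>w\<in>Pow (Q - T). c w = 0"
      using Q(1) by (simp add: sum_nonneg_eq_0_iff)
    then show False
      using False by (simp add: partial_overlap_def)
  qed
  obtain \<xi> where "qstate Q \<xi>" "mp_product Q \<xi>" "(cmod (qinner Q a \<xi>))\<^sup>2 = ?G / ?X"
    using partial_overlap_product_witness[OF Q G X] .
  then have "?G / ?X \<le> 1 - \<epsilon>\<^sup>2"
    using far unfolding eps_far_mp_def by metis
  then show ?thesis
    using X by (simp add: divide_le_eq)
qed

text \<open>\<open>reduced_density Q T a\<close> is the matrix of the reduced state \<open>\<rho>\<^sub>T = tr\<^sub>Q\<^sub>-\<^sub>T |a\<rangle>\<langle>a|\<close>, so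
  \<open>purity Q T a = tr \<rho>\<^sub>T\<^sup>2\<close>.\<close>
definition reduced_density ::
    "nat set \<Rightarrow> nat set \<Rightarrow> (nat set \<Rightarrow> complex) \<Rightarrow> nat set \<Rightarrow> nat set \<Rightarrow> complex" where
  "reduced_density Q T a u u' = (\<Sum>w\<in>Pow (Q - T). a (u \<union> w) * cnj (a (u' \<union> w)))"

definition purity :: "nat set \<Rightarrow> nat set \<Rightarrow> (nat set \<Rightarrow> complex) \<Rightarrow> real" where
  "purity Q T a = (\<Sum>u\<in>Pow T. \<Sum>u'\<in>Pow T. (cmod (reduced_density Q T a u u'))\<^sup>2)"

lemma reduced_density_eq_partial_overlap:
  "reduced_density Q T a u u' = partial_overlap Q T a (\<lambda>w. a (u \<union> w)) u'"
  unfolding reduced_density_def partial_overlap_def by (simp add: mult.commute)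

lemma purity_nonneg: "0 \<le> purity Q T a"
  unfolding purity_def by (intro sum_nonneg) simp

lemma purity_le_partial_overlap_bound:
  assumes "finite Q" "T \<subseteq> Q" "qstate Q a"
    and bound: "\<And>c. (\<Sum>u\<in>Pow T. (cmod (partial_overlap Q T a c u))\<^sup>2)
      \<le> \<Lambda> * (\<Sum>w\<in>Pow (Q - T). (cmod (c w))\<^sup>2)"
  shows "purity Q T a \<le> \<Lambda>"
proof -
  have "purity Q T a \<le> (\<Sum>u\<in>Pow T. \<Lambda> * (\<Sum>w\<in>Pow (Q - T). (cmod (a (u \<union> w)))\<^sup>2))"
    unfolding purity_def reduced_density_eq_partial_overlap by (intro sum_mono bound)
  also have "\<dots> = \<Lambda> * (\<Sum>x\<in>Pow Q. (cmod (a x))\<^sup>2)"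
    by (simp add: sum_Pow_split[OF assms(1,2)] sum_distrib_left)
  finally show ?thesis
    using assms(3) unfolding qstate_def by simp
qed

lemma purity_le_one:
  assumes "finite Q" "T \<subseteq> Q" "qstate Q a"
  shows "purity Q T a \<le> 1"
  using purity_le_partial_overlap_bound[OF assms, of 1] partial_overlap_norm_le[OF assms] by simp

text \<open>The purity of a reduced state is at most the largest squared overlap with a state that is a
  product across \<open>T\<close>.\<close>
lemma purity_le_far:
  assumes "finite Q" "T \<noteq> {}" "T \<subset> Q" "qstate Q a" "eps_far_mp Q \<epsilon> a" "\<epsilon>\<^sup>2 \<le> 1"
  shows "purity Q T a \<le> 1 - \<epsilon>\<^sup>2"
  using assms by (intro purity_le_partial_overlap_bound partial_overlap_norm_le_far) auto

lemma purity_full: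
  assumes "qstate Q a"
  shows "purity Q Q a = 1"
  using assms unfolding purity_def reduced_density_def qstate_def
  by (simp add: norm_mult power_mult_distrib sum_product[symmetric])

lemma purity_empty:
  assumes "qstate Q a"
  shows "purity Q {} a = 1"
proof -
  have "reduced_density Q {} a {} {} = of_real (\<Sum>w\<in>Pow Q. (cmod (a w))\<^sup>2)"
    unfolding reduced_density_def of_real_sum of_real_cmod_squared by (simp add: mult.commute)
  then show ?thesis
    using assms unfolding purity_def qstate_def by simp
qed

section \<open>Swap tests\<close>

text \<open>\<open>swap_part T x y\<close> is the label of the first copy after the qubits in \<open>T\<close> of two copies
  labelled \<open>x\<close> and \<open>y\<close> are exchanged; \<open>swap_overlap Q T \<psi>\<close> is the expectation of this partial
  swap in \<open>\<psi> \<otimes> \<psi>\<close>.\<close>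
definition swap_part :: "nat set \<Rightarrow> nat set \<Rightarrow> nat set \<Rightarrow> nat set" where
  "swap_part T x y = (x - T) \<union> (y \<inter> T)"

definition swap_overlap :: "nat set \<Rightarrow> nat set \<Rightarrow> (nat set \<Rightarrow> complex) \<Rightarrow> complex" where
  "swap_overlap Q T \<psi> = (\<Sum>x\<in>Pow Q. \<Sum>y\<in>Pow Q.
     cnj (\<psi> x) * cnj (\<psi> y) * \<psi> (swap_part T x y) * \<psi> (swap_part T y x))"

lemma swap_part_subset: "x \<subseteq> Q \<Longrightarrow> y \<subseteq> Q \<Longrightarrow> swap_part T x y \<subseteq> Q"
  unfolding swap_part_def by auto

lemma swap_part_Int: "swap_part T x y \<inter> C = swap_part (T \<inter> C) (x \<inter> C) (y \<inter> C)"
  unfolding swap_part_def by blast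

lemma swap_overlap_eq_purity:
  assumes "finite Q" "T \<subseteq> Q"
  shows "swap_overlap Q T a = of_real (purity Q T a)"
proof -
  let ?W = "Pow (Q - T)"
  define F where "F u u' = (\<Sum>w\<in>?W. \<Sum>w'\<in>?W.
    cnj (a (u \<union> w)) * cnj (a (u' \<union> w')) * a (u' \<union> w) * a (u \<union> w'))" for u u'
  have swap: "swap_part T (u \<union> w) (u' \<union> w') = u' \<union> w"
    if "u \<in> Pow T" "u' \<in> Pow T" "w \<in> ?W" "w' \<in> ?W" for u u' w w'
    using that unfolding swap_part_def by blast
  have "swap_overlap Q T a = (\<Sum>u\<in>Pow T. \<Sum>w\<in>?W. \<Sum>u'\<in>Pow T. \<Sum>w'\<in>?W.
      cnj (a (u \<union> w)) * cnj (a (u' \<union> w')) * a (u' \<union> w) * a (u \<union> w'))"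
    unfolding swap_overlap_def by (simp add: sum_Pow_split[OF assms] swap)
  also have "\<dots> = (\<Sum>u\<in>Pow T. \<Sum>u'\<in>Pow T. F u u')"
    unfolding F_def by (intro sum.cong refl sum.swap)
  also have "\<dots> = (\<Sum>u\<in>Pow T. \<Sum>u'\<in>Pow T. of_real ((cmod (reduced_density Q T a u' u))\<^sup>2))"
  proof (intro sum.cong refl)
    fix u u'
    show "F u u' = of_real ((cmod (reduced_density Q T a u' u))\<^sup>2)"
      unfolding of_real_cmod_squared reduced_density_def F_def
      by (simp add: sum_product sum_distrib_left mult_ac, subst sum.swap, simp add: mult_ac)
  qed
  also have "\<dots> = of_real (purity Q T a)"
    unfolding purity_def of_real_sum by (rule sum.swap)
  finally show ?thesis .
qed

lemma swap_overlap_qtensor: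
  assumes "finite Q" "C \<subseteq> Q"
  shows "swap_overlap Q S (qtensor C (Q - C) a b)
    = swap_overlap C (S \<inter> C) a * swap_overlap (Q - C) (S \<inter> (Q - C)) b"
proof -
  define F where "F u u' = cnj (a u) * cnj (a u') * a (swap_part (S \<inter> C) u u')
    * a (swap_part (S \<inter> C) u' u)" for u u'
  define G where "G w w' = cnj (b w) * cnj (b w') * b (swap_part (S \<inter> (Q - C)) w w')
    * b (swap_part (S \<inter> (Q - C)) w' w)" for w w'
  have "swap_overlap Q S (qtensor C (Q - C) a b)
      = (\<Sum>x\<in>Pow Q. \<Sum>y\<in>Pow Q. F (x \<inter> C) (y \<inter> C) * G (x \<inter> (Q - C)) (y \<inter> (Q - C)))"
    unfolding swap_overlap_def qtensor_def F_def G_def by (simp add: swap_part_Int mult_ac)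
  also have "\<dots> = (\<Sum>u\<in>Pow C. \<Sum>w\<in>Pow (Q - C). \<Sum>u'\<in>Pow C. \<Sum>w'\<in>Pow (Q - C). F u u' * G w w')"
    by (simp add: sum_Pow_split[OF assms] Int_Un_parts)
  also have "\<dots> = (\<Sum>u\<in>Pow C. \<Sum>u'\<in>Pow C. F u u') * (\<Sum>w\<in>Pow (Q - C). \<Sum>w'\<in>Pow (Q - C). G w w')"
    by (simp add: sum_product sum.swap[of _ "Pow (Q - C)" "Pow C"])
  also have "\<dots> = swap_overlap C (S \<inter> C) a * swap_overlap (Q - C) (S \<inter> (Q - C)) b"
    unfolding swap_overlap_def F_def G_def ..
  finally show ?thesis .
qed

lemma swap_overlap_qtensor_eq_purity:
  assumes "finite Q" "C \<subseteq> Q"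
  shows "swap_overlap Q S (qtensor C (Q - C) a b)
    = of_real (purity C (S \<inter> C) a * purity (Q - C) (S \<inter> (Q - C)) b)"
proof -
  have "finite C" "finite (Q - C)"
    using assms finite_subset by auto
  then show ?thesis
    using assms by (simp add: swap_overlap_qtensor swap_overlap_eq_purity)
qed

lemma swap_overlap_qtensor_cut:
  assumes "finite Q" "C \<subseteq> Q" "qstate C a" "qstate (Q - C) b"
  shows "swap_overlap Q C (qtensor C (Q - C) a b) = 1"
proof -
  have "C \<inter> (Q - C) = {}" by blast
  then show ?thesis
    using assms by (simp add: swap_overlap_qtensor_eq_purity purity_full purity_empty)
qed

lemma swap_overlap_qtensor_nonneg:
  assumes "finite Q" "C \<subseteq> Q"
  shows "0 \<le> Re (swap_overlap Q S (qtensor C (Q - C) a b))"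
  using assms by (simp add: swap_overlap_qtensor_eq_purity purity_nonneg)

text \<open>A cut \<open>S\<close> other than \<open>C\<close> and \<open>Q - C\<close> cuts through \<open>C\<close> or through \<open>Q - C\<close>.\<close>
lemma swap_overlap_qtensor_le_far:
  assumes Q: "finite Q" "C \<subseteq> Q" and qs: "qstate C a" "qstate (Q - C) b"
    and far: "eps_far_mp C \<epsilon> a" "eps_far_mp (Q - C) \<epsilon> b" and \<epsilon>: "\<epsilon>\<^sup>2 \<le> 1"
    and S: "S \<noteq> {}" "S \<subset> Q" "S \<noteq> C" "S \<noteq> Q - C"
  shows "Re (swap_overlap Q S (qtensor C (Q - C) a b)) \<le> 1 - \<epsilon>\<^sup>2"
proof -
  have fin: "finite C" "finite (Q - C)"
    using Q finite_subset by auto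
  let ?pa = "purity C (S \<inter> C) a" and ?pb = "purity (Q - C) (S \<inter> (Q - C)) b"
  have pa: "0 \<le> ?pa" "?pa \<le> 1" and pb: "0 \<le> ?pb" "?pb \<le> 1"
    using purity_nonneg purity_le_one[OF fin(1) _ qs(1)] purity_le_one[OF fin(2) _ qs(2)] by auto
  consider "S \<inter> C \<noteq> {}" "S \<inter> C \<subset> C" | "S \<inter> (Q - C) \<noteq> {}" "S \<inter> (Q - C) \<subset> Q - C"
    using S Q by blast
  then have "?pa * ?pb \<le> 1 - \<epsilon>\<^sup>2"
  proof cases
    case 1
    then have "?pa \<le> 1 - \<epsilon>\<^sup>2" by (rule purity_le_far[OF fin(1) _ _ qs(1) far(1) \<epsilon>])
    then show ?thesis using pa pb mult_mono[of ?pa "1 - \<epsilon>\<^sup>2" ?pb 1] by simp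
  next
    case 2
    then have "?pb \<le> 1 - \<epsilon>\<^sup>2" by (rule purity_le_far[OF fin(2) _ _ qs(2) far(2) \<epsilon>])
    then show ?thesis using pa pb mult_mono[of ?pa 1 ?pb "1 - \<epsilon>\<^sup>2"] by simp
  qed
  then show ?thesis
    using Q by (simp add: swap_overlap_qtensor_eq_purity)
qed

text \<open>\<open>swap_basis t u\<close> is a real orthonormal basis of two qubits: \<open>|uu\<rangle>\<close> if \<open>\<not> t\<close>, and
  \<open>(|01\<rangle> + |10\<rangle>)/\<surd>2\<close> resp. \<open>(|10\<rangle> - |01\<rangle>)/\<surd>2\<close> if \<open>t\<close> and \<open>\<not> u\<close> resp. \<open>u\<close>. Each vector is an
  eigenvector of the swap, with eigenvalue \<open>-1\<close> exactly when \<open>t \<and> u\<close>.\<close>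
definition swap_basis :: "bool \<Rightarrow> bool \<Rightarrow> bool \<Rightarrow> bool \<Rightarrow> real" where
  "swap_basis t u b1 b2 = (if \<not> t then (if b1 = u \<and> b2 = u then 1 else 0)
    else if b1 = b2 then 0 else if u \<and> \<not> b1 then - 1 / sqrt 2 else 1 / sqrt 2)"

text \<open>Spectral decompositions of the identity (\<open>\<not> s\<close>) and of the swap (\<open>s\<close>).\<close>
lemma sum_swap_basis:
  "(\<Sum>t\<in>{False, True}. \<Sum>u\<in>{False, True}.
      (if s \<and> t \<and> u then -1 else 1) * swap_basis t u b1 b2 * swap_basis t u c1 c2)
    = (if (if s then c1 = b2 \<and> c2 = b1 else c1 = b1 \<and> c2 = b2) then 1 else 0)"
proof -
  have "1 / sqrt 2 * (1 / sqrt 2) = (1 / 2 :: real)"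
    by (simp add: divide_simps)
  then show ?thesis
    by (cases s; cases b1; cases b2; cases c1; cases c2) (simp_all add: swap_basis_def)
qed

definition swap_basis_vec :: "nat \<Rightarrow> nat set \<Rightarrow> nat set \<Rightarrow> nat set \<Rightarrow> nat set \<Rightarrow> real" where
  "swap_basis_vec n T U x y = (\<Prod>j<n. swap_basis (j \<in> T) (j \<in> U) (j \<in> x) (j \<in> y))"

definition swap_sign :: "nat \<Rightarrow> nat set \<Rightarrow> nat set \<Rightarrow> nat set \<Rightarrow> real" where
  "swap_sign n S T U = (\<Prod>j<n. if j \<in> S \<and> j \<in> T \<and> j \<in> U then -1 else 1)"

lemma swap_sign_empty: "swap_sign n {} T U = 1"
  unfolding swap_sign_def by simp

lemma swap_sign_cases: "swap_sign n S T U = 1 \<or> swap_sign n S T U = -1"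
  unfolding swap_sign_def by (induction n) auto

lemma sum_swap_basis_vec:
  assumes "x \<subseteq> {..<n}" "y \<subseteq> {..<n}" "x' \<subseteq> {..<n}" "y' \<subseteq> {..<n}"
  shows "(\<Sum>T\<in>Pow {..<n}. \<Sum>U\<in>Pow {..<n}.
      swap_sign n S T U * swap_basis_vec n T U x y * swap_basis_vec n T U x' y')
    = (if x' = swap_part S x y \<and> y' = swap_part S y x then 1 else 0)"
proof -
  define h where "h j t u = (if j \<in> S \<and> t \<and> u then -1 else 1)
    * swap_basis t u (j \<in> x) (j \<in> y) * swap_basis t u (j \<in> x') (j \<in> y')" for j t u
  have "(\<Sum>T\<in>Pow {..<n}. \<Sum>U\<in>Pow {..<n}.
      swap_sign n S T U * swap_basis_vec n T U x y * swap_basis_vec n T U x' y')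
    = (\<Sum>T\<in>Pow {..<n}. \<Sum>U\<in>Pow {..<n}. \<Prod>j<n. h j (j \<in> T) (j \<in> U))"
    unfolding swap_sign_def swap_basis_vec_def h_def by (simp add: prod.distrib)
  also have "\<dots> = (\<Sum>T\<in>Pow {..<n}. \<Prod>j<n. h j (j \<in> T) False + h j (j \<in> T) True)"
    by (intro sum.cong refl sum_Pow_prod_mem finite_lessThan)
  also have "\<dots> = (\<Prod>j<n. (h j False False + h j False True) + (h j True False + h j True True))"
    by (intro sum_Pow_prod_mem finite_lessThan)
  also have "\<dots> = (\<Prod>j<n. if if j \<in> S then (j \<in> x') = (j \<in> y) \<and> (j \<in> y') = (j \<in> x)
      else (j \<in> x') = (j \<in> x) \<and> (j \<in> y') = (j \<in> y) then 1 else 0)"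
    using sum_swap_basis by (intro prod.cong refl) (simp add: h_def add_ac)
  also have "\<dots> = (if x' = swap_part S x y \<and> y' = swap_part S y x then 1 else 0)"
    using assms by (simp add: prod_indicator swap_part_def set_eq_iff) blast
  finally show ?thesis .
qed

definition pair_overlap :: "nat \<Rightarrow> nat set \<Rightarrow> nat set \<Rightarrow> (nat set \<Rightarrow> complex) \<Rightarrow> complex" where
  "pair_overlap n T U \<psi> =
     (\<Sum>x\<in>Pow {..<n}. \<Sum>y\<in>Pow {..<n}. of_real (swap_basis_vec n T U x y) * \<psi> x * \<psi> y)"

lemma sum_swap_sign_pair_overlap:
  "(\<Sum>T\<in>Pow {..<n}. \<Sum>U\<in>Pow {..<n}.
      of_real (swap_sign n S T U * (cmod (pair_overlap n T U \<psi>))\<^sup>2))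
    = swap_overlap {..<n} S \<psi>"
proof -
  let ?P = "Pow {..<n}"
  define c where "c x y x' y' = cnj (\<psi> x) * cnj (\<psi> y) * \<psi> x' * \<psi> y'" for x y x' y'
  define K where "K T U x y x' y' = swap_sign n S T U * swap_basis_vec n T U x y
    * swap_basis_vec n T U x' y'" for T U x y x' y'
  have square: "of_real (swap_sign n S T U * (cmod (pair_overlap n T U \<psi>))\<^sup>2)
      = (\<Sum>x\<in>?P. \<Sum>y\<in>?P. \<Sum>x'\<in>?P. \<Sum>y'\<in>?P. c x y x' y' * of_real (K T U x y x' y'))" for T U
    unfolding of_real_mult of_real_cmod_squared pair_overlap_def c_def K_def
    by (simp add: sum_product sum_distrib_left mult_ac, intro sum.cong refl sum.swap)
  have "(\<Sum>T\<in>?P. \<Sum>U\<in>?P. of_real (swap_sign n S T U * (cmod (pair_overlap n T U \<psi>))\<^sup>2))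
      = (\<Sum>x\<in>?P. \<Sum>y\<in>?P. \<Sum>x'\<in>?P. \<Sum>y'\<in>?P. \<Sum>T\<in>?P. \<Sum>U\<in>?P. c x y x' y' * of_real (K T U x y x' y'))"
    unfolding square
    by (rule trans[OF sum_rotate3], rule sum.cong[OF refl],
        rule trans[OF sum_rotate3], rule sum.cong[OF refl],
        rule trans[OF sum_rotate3], rule sum.cong[OF refl], rule sum_rotate3)
  also have "\<dots> = (\<Sum>x\<in>?P. \<Sum>y\<in>?P. \<Sum>x'\<in>?P. \<Sum>y'\<in>?P.
      if x' = swap_part S x y \<and> y' = swap_part S y x then c x y x' y' else 0)"
  proof (intro sum.cong refl)
    fix x y x' y' assume "x \<in> ?P" "y \<in> ?P" "x' \<in> ?P" "y' \<in> ?P"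
    then have "(\<Sum>T\<in>?P. \<Sum>U\<in>?P. K T U x y x' y')
        = (if x' = swap_part S x y \<and> y' = swap_part S y x then 1 else 0)"
      unfolding K_def by (simp add: sum_swap_basis_vec)
    then show "(\<Sum>T\<in>?P. \<Sum>U\<in>?P. c x y x' y' * of_real (K T U x y x' y'))
        = (if x' = swap_part S x y \<and> y' = swap_part S y x then c x y x' y' else 0)"
      by (simp only: sum_distrib_left[symmetric] of_real_sum[symmetric]) simp
  qed
  also have "\<dots> = (\<Sum>x\<in>?P. \<Sum>y\<in>?P. c x y (swap_part S x y) (swap_part S y x))"
    by (intro sum.cong refl sum_delta2) (auto simp: swap_part_subset)
  also have "\<dots> = swap_overlap {..<n} S \<psi>"
    unfolding swap_overlap_def c_def ..
  finally show ?thesis .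
qed

text \<open>Measuring a pair of copies in the basis \<open>swap_basis_vec\<close> and multiplying the swap signs of
  the qubits in \<open>S\<close> performs the swap test on \<open>S\<close>.\<close>
lemma prob_swap_sign_one:
  assumes "qstate {..<n} \<psi>"
  shows "(\<Sum>T\<in>Pow {..<n}. \<Sum>U\<in>Pow {..<n}.
      if swap_sign n S T U = 1 then (cmod (pair_overlap n T U \<psi>))\<^sup>2 else 0)
    = (1 + Re (swap_overlap {..<n} S \<psi>)) / 2"
proof -
  let ?P = "Pow {..<n}" and ?p = "\<lambda>T U. (cmod (pair_overlap n T U \<psi>))\<^sup>2"
  have signed: "(\<Sum>T\<in>?P. \<Sum>U\<in>?P. swap_sign n S' T U * ?p T U) = Re (swap_overlap {..<n} S' \<psi>)"
    for S'
    using arg_cong[OF sum_swap_sign_pair_overlap[of n S' \<psi>], of Re] by (simp add: Re_sum)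
  have "swap_overlap {..<n} {} \<psi> = 1"
    using assms by (simp add: swap_overlap_eq_purity purity_empty)
  then have total: "(\<Sum>T\<in>?P. \<Sum>U\<in>?P. ?p T U) = 1"
    using signed[of "{}"] by (simp add: swap_sign_empty)
  have "(\<Sum>T\<in>?P. \<Sum>U\<in>?P. if swap_sign n S T U = 1 then ?p T U else 0)
      = (\<Sum>T\<in>?P. \<Sum>U\<in>?P. (?p T U + swap_sign n S T U * ?p T U) / 2)"
    by (intro sum.cong refl) (use swap_sign_cases in fastforce)
  also have "\<dots> = (1 + Re (swap_overlap {..<n} S \<psi>)) / 2"
    using signed[of S] total by (simp add: sum_divide_distrib[symmetric] sum.distrib)
  finally show ?thesis .
qed

section \<open>The measurement on \<open>m\<close> copies\<close>

lemma copies_basis_0: "copies_basis n 0 = {[]}"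
  unfolding copies_basis_def by auto

lemma copies_basis_Suc:
  "copies_basis n (Suc m) = (\<lambda>(x, xs). x # xs) ` (Pow {..<n} \<times> copies_basis n m)"
proof
  show "copies_basis n (Suc m) \<subseteq> (\<lambda>(x, xs). x # xs) ` (Pow {..<n} \<times> copies_basis n m)"
  proof
    fix xs assume "xs \<in> copies_basis n (Suc m)"
    then obtain y ys where "xs = y # ys" "y \<in> Pow {..<n}" "ys \<in> copies_basis n m"
      unfolding copies_basis_def by (cases xs) auto
    then show "xs \<in> (\<lambda>(x, xs). x # xs) ` (Pow {..<n} \<times> copies_basis n m)" by force
  qed
  show "(\<lambda>(x, xs). x # xs) ` (Pow {..<n} \<times> copies_basis n m) \<subseteq> copies_basis n (Suc m)"
    unfolding copies_basis_def by fastforce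
qed

lemma copies_basis_SucE:
  assumes "xs \<in> copies_basis n (Suc m)"
  obtains y ys where "xs = y # ys" "y \<in> Pow {..<n}" "ys \<in> copies_basis n m"
  using assms that unfolding copies_basis_def by (cases xs) auto

lemma sum_copies_basis_Suc:
  "(\<Sum>xs\<in>copies_basis n (Suc m). f xs) = (\<Sum>x\<in>Pow {..<n}. \<Sum>xs\<in>copies_basis n m. f (x # xs))"
proof -
  have "inj_on (\<lambda>(x, xs). x # xs) (Pow {..<n} \<times> copies_basis n m)"
    by (auto simp: inj_on_def)
  then have "(\<Sum>xs\<in>copies_basis n (Suc m). f xs) = (\<Sum>(x, xs)\<in>Pow {..<n} \<times> copies_basis n m. f (x # xs))"
    by (simp add: copies_basis_Suc sum.reindex case_prod_unfold)
  then show ?thesis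
    by (simp add: sum.cartesian_product)
qed

lemma tensor_pow_Cons: "tensor_pow \<psi> (x # xs) = \<psi> x * tensor_pow \<psi> xs"
  unfolding tensor_pow_def by simp

text \<open>The copies \<open>2i\<close> and \<open>2i+1\<close> are measured jointly in the basis \<open>swap_basis_vec\<close>; when \<open>m\<close> is
  odd the last copy is measured in the computational basis.\<close>
datatype outcome = Pair_outcome "nat set" "nat set" | Single_outcome "nat set"

fun outcomes :: "nat \<Rightarrow> nat \<Rightarrow> outcome list set" where
  "outcomes n 0 = {[]}"
| "outcomes n (Suc 0) = (\<lambda>z. [Single_outcome z]) ` Pow {..<n}"
| "outcomes n (Suc (Suc m)) =
     (\<lambda>(T, U, ls). Pair_outcome T U # ls) ` (Pow {..<n} \<times> Pow {..<n} \<times> outcomes n m)"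

fun outcome_vec :: "nat \<Rightarrow> outcome list \<Rightarrow> nat set list \<Rightarrow> real" where
  "outcome_vec n [] [] = 1"
| "outcome_vec n (Single_outcome z # ls) (x # xs) = (if x = z then 1 else 0) * outcome_vec n ls xs"
| "outcome_vec n (Pair_outcome T U # ls) (x # y # xs) = swap_basis_vec n T U x y * outcome_vec n ls xs"
| "outcome_vec n _ _ = 0"

fun swap_consistent :: "nat \<Rightarrow> nat set \<Rightarrow> outcome list \<Rightarrow> bool" where
  "swap_consistent n S [] = True"
| "swap_consistent n S (Single_outcome z # ls) = swap_consistent n S ls"
| "swap_consistent n S (Pair_outcome T U # ls) = (swap_sign n S T U = 1 \<and> swap_consistent n S ls)"

lemma finite_outcomes: "finite (outcomes n m)"
  by (induction n m rule: outcomes.induct) auto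

lemma swap_consistent_empty: "swap_consistent n {} L"
  by (induction n "{} :: nat set" L rule: swap_consistent.induct) (auto simp: swap_sign_empty)

lemma sum_outcomes_1: "(\<Sum>L\<in>outcomes n (Suc 0). f L) = (\<Sum>z\<in>Pow {..<n}. f [Single_outcome z])"
  by (simp add: sum.reindex inj_on_def)

lemma sum_outcomes_Suc_Suc:
  "(\<Sum>L\<in>outcomes n (Suc (Suc m)). f L)
    = (\<Sum>T\<in>Pow {..<n}. \<Sum>U\<in>Pow {..<n}. \<Sum>ls\<in>outcomes n m. f (Pair_outcome T U # ls))"
proof -
  have "inj_on (\<lambda>(T, U, ls). Pair_outcome T U # ls) (Pow {..<n} \<times> Pow {..<n} \<times> outcomes n m)"
    by (auto simp: inj_on_def)
  then have "(\<Sum>L\<in>outcomes n (Suc (Suc m)). f L)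
      = (\<Sum>(T, U, ls)\<in>Pow {..<n} \<times> Pow {..<n} \<times> outcomes n m. f (Pair_outcome T U # ls))"
    by (simp add: sum.reindex case_prod_unfold)
  then show ?thesis
    by (simp add: sum.cartesian_product finite_outcomes)
qed

text \<open>The vectors \<open>outcome_vec n L\<close>, \<open>L \<in> outcomes n m\<close>, form an orthonormal basis of the
  \<open>m\<close>-copy space; only completeness is needed.\<close>
lemma outcome_vec_complete:
  assumes "xs \<in> copies_basis n m" "ys \<in> copies_basis n m"
  shows "(\<Sum>L\<in>outcomes n m. outcome_vec n L xs * outcome_vec n L ys) = (if xs = ys then 1 else 0)"
  using assms
proof (induction n m arbitrary: xs ys rule: outcomes.induct)
  case (1 n)
  then show ?case by (simp add: copies_basis_0)
next
  case (2 n)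
  then obtain x y where xs: "xs = [x]" "ys = [y]" "x \<in> Pow {..<n}"
    by (auto simp: copies_basis_0 elim!: copies_basis_SucE)
  then have "(\<Sum>L\<in>outcomes n (Suc 0). outcome_vec n L xs * outcome_vec n L ys)
      = (\<Sum>z\<in>Pow {..<n}. if x = z then (if y = z then 1 else 0) else 0)"
    unfolding sum_outcomes_1 by (intro sum.cong refl) simp
  then show ?case
    using xs by (simp add: sum.delta)
next
  case (3 n m)
  from "3.prems" obtain x x' xs' y y' ys' where xs: "xs = x # x' # xs'" "ys = y # y' # ys'"
    and mem: "x \<in> Pow {..<n}" "x' \<in> Pow {..<n}" "y \<in> Pow {..<n}" "y' \<in> Pow {..<n}"
      "xs' \<in> copies_basis n m" "ys' \<in> copies_basis n m"
    by (auto elim!: copies_basis_SucE)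
  have pair: "(\<Sum>T\<in>Pow {..<n}. \<Sum>U\<in>Pow {..<n}. swap_basis_vec n T U x x' * swap_basis_vec n T U y y')
      = (if y = x \<and> y' = x' then 1 else 0)"
    using sum_swap_basis_vec[of x n x' y y' "{}"] mem by (simp add: swap_sign_empty swap_part_def)
  have "(\<Sum>L\<in>outcomes n (Suc (Suc m)). outcome_vec n L xs * outcome_vec n L ys)
      = (\<Sum>T\<in>Pow {..<n}. \<Sum>U\<in>Pow {..<n}. swap_basis_vec n T U x x' * swap_basis_vec n T U y y')
        * (\<Sum>ls\<in>outcomes n m. outcome_vec n ls xs' * outcome_vec n ls ys')"
    unfolding sum_outcomes_Suc_Suc xs by (simp add: sum_distrib_left sum_distrib_right mult_ac)
  also have "\<dots> = (if xs = ys then 1 else 0)"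
    unfolding pair "3.IH"[OF mem(5,6)] xs by auto
  finally show ?case .
qed

definition outcome_amp :: "nat \<Rightarrow> nat \<Rightarrow> outcome list \<Rightarrow> (nat set list \<Rightarrow> complex) \<Rightarrow> complex" where
  "outcome_amp n m L v = (\<Sum>xs\<in>copies_basis n m. of_real (outcome_vec n L xs) * v xs)"

lemma outcome_amp_Nil: "outcome_amp n 0 [] (tensor_pow \<psi>) = 1"
  unfolding outcome_amp_def by (simp add: copies_basis_0 tensor_pow_def)

lemma outcome_amp_Single:
  assumes "z \<in> Pow {..<n}"
  shows "outcome_amp n (Suc 0) [Single_outcome z] (tensor_pow \<psi>) = \<psi> z"
proof -
  have "outcome_amp n (Suc 0) [Single_outcome z] (tensor_pow \<psi>)
      = (\<Sum>x\<in>Pow {..<n}. if x = z then \<psi> x else 0)"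
    unfolding outcome_amp_def sum_copies_basis_Suc copies_basis_0
    by (intro sum.cong refl) (simp add: tensor_pow_def)
  then show ?thesis
    using assms by (simp add: sum.delta')
qed

lemma outcome_amp_Pair:
  "outcome_amp n (Suc (Suc m)) (Pair_outcome T U # ls) (tensor_pow \<psi>)
    = pair_overlap n T U \<psi> * outcome_amp n m ls (tensor_pow \<psi>)"
  unfolding outcome_amp_def pair_overlap_def
  by (simp add: sum_copies_basis_Suc tensor_pow_Cons sum_distrib_left sum_distrib_right mult_ac)

definition outcome_prob :: "nat \<Rightarrow> nat \<Rightarrow> (nat set \<Rightarrow> complex) \<Rightarrow> outcome list \<Rightarrow> real" where
  "outcome_prob n m \<psi> L = (cmod (outcome_amp n m L (tensor_pow \<psi>)))\<^sup>2"

text \<open>The pairs are measured independently, so the swap tests on \<open>S\<close> all pass with probability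
  the \<open>(m div 2)\<close>-th power of the single-pair probability.\<close>
lemma prob_swap_consistent:
  assumes "qstate {..<n} \<psi>"
  shows "(\<Sum>L\<in>outcomes n m. if swap_consistent n S L then outcome_prob n m \<psi> L else 0)
    = ((1 + Re (swap_overlap {..<n} S \<psi>)) / 2) ^ (m div 2)"
  using assms
proof (induction n m rule: outcomes.induct)
  case (1 n)
  then show ?case by (simp add: outcome_prob_def outcome_amp_Nil)
next
  case (2 n)
  then show ?case
    unfolding sum_outcomes_1 by (simp add: outcome_prob_def outcome_amp_Single qstate_def)
next
  case (3 n m)
  let ?A = "\<lambda>T U. if swap_sign n S T U = 1 then (cmod (pair_overlap n T U \<psi>))\<^sup>2 else 0"
  let ?B = "\<lambda>ls. if swap_consistent n S ls then outcome_prob n m \<psi> ls else 0"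
  have "(\<Sum>L\<in>outcomes n (Suc (Suc m)).
        if swap_consistent n S L then outcome_prob n (Suc (Suc m)) \<psi> L else 0)
      = (\<Sum>T\<in>Pow {..<n}. \<Sum>U\<in>Pow {..<n}. \<Sum>ls\<in>outcomes n m. ?A T U * ?B ls)"
    unfolding sum_outcomes_Suc_Suc
    by (intro sum.cong refl) (simp add: outcome_prob_def outcome_amp_Pair norm_mult power_mult_distrib)
  also have "\<dots> = (\<Sum>T\<in>Pow {..<n}. \<Sum>U\<in>Pow {..<n}. ?A T U * (\<Sum>ls\<in>outcomes n m. ?B ls))"
    by (simp only: sum_distrib_left)
  also have "\<dots> = (\<Sum>T\<in>Pow {..<n}. \<Sum>U\<in>Pow {..<n}. ?A T U) * (\<Sum>ls\<in>outcomes n m. ?B ls)"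
    by (simp only: sum_distrib_right)
  finally show ?case
    using prob_swap_sign_one[OF "3.prems", of S] "3.IH"[OF "3.prems"] by simp
qed

lemma sum_outcome_prob:
  assumes "qstate {..<n} \<psi>"
  shows "(\<Sum>L\<in>outcomes n m. outcome_prob n m \<psi> L) = 1"
  using prob_swap_consistent[OF assms, of "{}" m] assms
  by (simp add: swap_consistent_empty swap_overlap_eq_purity purity_empty)

lemma prob_not_swap_consistent:
  assumes "qstate {..<n} \<psi>"
  shows "(\<Sum>L\<in>outcomes n m. if swap_consistent n S L then 0 else outcome_prob n m \<psi> L)
    = 1 - ((1 + Re (swap_overlap {..<n} S \<psi>)) / 2) ^ (m div 2)"
proof -
  have "(\<Sum>L\<in>outcomes n m. if swap_consistent n S L then 0 else outcome_prob n m \<psi> L)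
      = (\<Sum>L\<in>outcomes n m. outcome_prob n m \<psi> L)
        - (\<Sum>L\<in>outcomes n m. if swap_consistent n S L then outcome_prob n m \<psi> L else 0)"
    by (simp add: sum_subtractf[symmetric]) (intro sum.cong refl, auto)
  then show ?thesis
    using sum_outcome_prob[OF assms] prob_swap_consistent[OF assms] by simp
qed

definition guess_cut :: "nat \<Rightarrow> outcome list \<Rightarrow> nat set" where
  "guess_cut n L = (if \<exists>S. S \<noteq> {} \<and> S \<subset> {..<n} \<and> swap_consistent n S L
     then SOME S. S \<noteq> {} \<and> S \<subset> {..<n} \<and> swap_consistent n S L else {})"

lemma guess_cut_consistent:
  assumes "S \<noteq> {}" "S \<subset> {..<n}" "swap_consistent n S L"
  shows "guess_cut n L \<noteq> {} \<and> guess_cut n L \<subset> {..<n} \<and> swap_consistent n (guess_cut n L) L"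
proof -
  have ex: "\<exists>S. S \<noteq> {} \<and> S \<subset> {..<n} \<and> swap_consistent n S L"
    using assms by blast
  then show ?thesis
    using someI_ex[OF ex] unfolding guess_cut_def by simp
qed

lemma guess_cut_Pow: "guess_cut n L \<in> Pow {..<n}"
proof (cases "\<exists>S. S \<noteq> {} \<and> S \<subset> {..<n} \<and> swap_consistent n S L")
  case True
  then show ?thesis
    using guess_cut_consistent by blast
qed (auto simp: guess_cut_def)

definition cut_povm :: "nat \<Rightarrow> nat \<Rightarrow> nat set \<Rightarrow> nat set list \<Rightarrow> nat set list \<Rightarrow> complex" where
  "cut_povm n m C xs ys = (\<Sum>L\<in>{L\<in>outcomes n m. guess_cut n L = C}.
     of_real (outcome_vec n L xs * outcome_vec n L ys))"

lemma qform_cut_povm: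
  "qform (copies_basis n m) (cut_povm n m C) v
    = of_real (\<Sum>L\<in>{L\<in>outcomes n m. guess_cut n L = C}. (cmod (outcome_amp n m L v))\<^sup>2)"
proof -
  let ?B = "copies_basis n m" and ?F = "{L\<in>outcomes n m. guess_cut n L = C}"
  have "qform ?B (cut_povm n m C) v = (\<Sum>x\<in>?B. \<Sum>y\<in>?B. \<Sum>L\<in>?F.
      (cnj (v x) * of_real (outcome_vec n L x)) * (of_real (outcome_vec n L y) * v y))"
    unfolding qform_def cut_povm_def by (simp add: sum_distrib_left sum_distrib_right mult_ac)
  also have "\<dots> = (\<Sum>L\<in>?F. \<Sum>x\<in>?B. \<Sum>y\<in>?B.
      (cnj (v x) * of_real (outcome_vec n L x)) * (of_real (outcome_vec n L y) * v y))"
    by (rule sum_rotate3)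
  also have "\<dots> = (\<Sum>L\<in>?F. cnj (outcome_amp n m L v) * outcome_amp n m L v)"
    unfolding outcome_amp_def
    by (simp add: sum_product mult.commute) (rule sum.cong[OF refl], rule sum.swap)
  also have "\<dots> = of_real (\<Sum>L\<in>?F. (cmod (outcome_amp n m L v))\<^sup>2)"
    by (simp only: of_real_sum of_real_cmod_squared)
  finally show ?thesis .
qed

lemma prob_cut_povm:
  "Re (qform (copies_basis n m) (cut_povm n m C) (tensor_pow \<psi>))
    = (\<Sum>L\<in>outcomes n m. if guess_cut n L = C then outcome_prob n m \<psi> L else 0)"
  unfolding qform_cut_povm outcome_prob_def by (simp add: sum.inter_filter[OF finite_outcomes])

lemma is_povm_cut_povm: "is_povm (copies_basis n m) (Pow {..<n}) (cut_povm n m)"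
  unfolding is_povm_def
proof (intro conjI ballI)
  fix C
  show "psd_op (copies_basis n m) (cut_povm n m C)"
    unfolding psd_op_def qform_cut_povm by (simp add: sum_nonneg)
next
  fix xs ys assume "xs \<in> copies_basis n m" "ys \<in> copies_basis n m"
  have "(\<Sum>C\<in>Pow {..<n}. cut_povm n m C xs ys)
      = (\<Sum>L\<in>outcomes n m. of_real (outcome_vec n L xs * outcome_vec n L ys))"
    unfolding cut_povm_def
    by (rule sum.group) (use guess_cut_Pow finite_outcomes in blast)+
  also have "\<dots> = of_real (\<Sum>L\<in>outcomes n m. outcome_vec n L xs * outcome_vec n L ys)"
    by simp
  also have "\<dots> = (if xs = ys then 1 else 0)"
    using outcome_vec_complete[OF \<open>xs \<in> _\<close> \<open>ys \<in> _\<close>] by simp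
  finally show "(\<Sum>C\<in>Pow {..<n}. cut_povm n m C xs ys) = (if xs = ys then 1 else 0)" .
qed

text \<open>The outcome \<open>C\<close> or \<open>{..<n} - C\<close> is missed only if some wrong cut passes all swap tests,
  which each of at most \<open>2\<^sup>n\<close> wrong cuts does with probability at most \<open>(1 - \<epsilon>\<^sup>2/2)\<^bsup>m div 2\<^esup>\<close>.\<close>
lemma cut_povm_correct_prob:
  assumes C: "C \<noteq> {}" "C \<subset> {..<n}" and qs: "qstate C a" "qstate ({..<n} - C) b"
    and far: "eps_far_mp C \<epsilon> a" "eps_far_mp ({..<n} - C) \<epsilon> b" and \<epsilon>: "\<epsilon>\<^sup>2 \<le> 1"
  defines "\<psi> \<equiv> qtensor C ({..<n} - C) a b"
  shows "1 - 2 ^ n * (1 - \<epsilon>\<^sup>2 / 2) ^ (m div 2)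
    \<le> Re (qform (copies_basis n m) (cut_povm n m C) (tensor_pow \<psi>))
      + Re (qform (copies_basis n m) (cut_povm n m ({..<n} - C)) (tensor_pow \<psi>))"
proof -
  let ?N = "{..<n}" and ?Ls = "outcomes n m" and ?p = "outcome_prob n m \<psi>"
  let ?W = "{S. S \<noteq> {} \<and> S \<subset> ?N \<and> S \<noteq> C \<and> S \<noteq> ?N - C}"
  have CN: "C \<subseteq> ?N" using C by auto
  have \<psi>: "qstate ?N \<psi>"
    unfolding \<psi>_def by (rule qstate_qtensor[OF _ CN qs]) simp
  have wrong: "(\<Sum>L\<in>?Ls. if swap_consistent n S L then ?p L else 0) \<le> (1 - \<epsilon>\<^sup>2 / 2) ^ (m div 2)"
    if "S \<in> ?W" for S
  proof -
    have "0 \<le> Re (swap_overlap ?N S \<psi>)"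
      unfolding \<psi>_def by (rule swap_overlap_qtensor_nonneg[OF finite_lessThan CN])
    moreover have "Re (swap_overlap ?N S \<psi>) \<le> 1 - \<epsilon>\<^sup>2"
      using that unfolding \<psi>_def
      by (intro swap_overlap_qtensor_le_far[OF finite_lessThan CN qs far \<epsilon>]) auto
    ultimately show ?thesis
      unfolding prob_swap_consistent[OF \<psi>] by (intro power_mono) auto
  qed
  have missed: "guess_cut n L \<in> {C, ?N - C} \<or> \<not> swap_consistent n C L
      \<or> (\<exists>S\<in>?W. swap_consistent n S L)" for L
  proof (cases "swap_consistent n C L")
    case True
    then show ?thesis
      using guess_cut_consistent[OF C True] by auto
  qed simp
  have finite_W: "finite ?W"
    by (rule finite_subset[of _ "Pow ?N"]) auto
  have "1 \<le> (\<Sum>L\<in>?Ls. if guess_cut n L \<in> {C, ?N - C} then ?p L else 0)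
      + (\<Sum>L\<in>?Ls. if swap_consistent n C L then 0 else ?p L)
      + (\<Sum>S\<in>?W. \<Sum>L\<in>?Ls. if swap_consistent n S L then ?p L else 0)"
    unfolding sum_outcome_prob[OF \<psi>, of m, symmetric]
    by (rule union_bound[OF finite_outcomes finite_W _ missed]) (simp add: outcome_prob_def)
  also have "(\<Sum>L\<in>?Ls. if swap_consistent n C L then 0 else ?p L) = 0"
    using prob_not_swap_consistent[OF \<psi>, where m = m and S = C] swap_overlap_qtensor_cut[OF _ CN qs]
    unfolding \<psi>_def by simp
  also have "(\<Sum>S\<in>?W. \<Sum>L\<in>?Ls. if swap_consistent n S L then ?p L else 0)
      \<le> real (card ?W) * (1 - \<epsilon>\<^sup>2 / 2) ^ (m div 2)"
    using wrong by (rule sum_bounded_above)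
  also have "\<dots> \<le> 2 ^ n * (1 - \<epsilon>\<^sup>2 / 2) ^ (m div 2)"
  proof (rule mult_right_mono)
    have "card ?W \<le> card (Pow ?N)"
      by (intro card_mono) auto
    then show "real (card ?W) \<le> 2 ^ n"
      by (simp add: card_Pow flip: of_nat_le_iff)
  qed (use \<epsilon> in simp)
  also have "(\<Sum>L\<in>?Ls. if guess_cut n L \<in> {C, ?N - C} then ?p L else 0)
      = Re (qform (copies_basis n m) (cut_povm n m C) (tensor_pow \<psi>))
        + Re (qform (copies_basis n m) (cut_povm n m (?N - C)) (tensor_pow \<psi>))"
    using C unfolding prob_cut_povm sum.distrib[symmetric] by (intro sum.cong refl) auto
  finally show ?thesis
    by simp
qed

lemma two_pow_mult_decay_le_one_percent:
  fixes n m :: nat and \<epsilon> :: real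
  assumes e: "0 < \<epsilon>" "\<epsilon> \<le> 1" and m: "800 * real n / \<epsilon>\<^sup>2 \<le> real m" and n: "n \<ge> 1"
  shows "2 ^ n * (1 - \<epsilon>\<^sup>2 / 2) ^ (m div 2) \<le> 1 / 100"
proof -
  define d where "d = \<epsilon>\<^sup>2 / 2"
  define p where "p = m div 2"
  have e2: "0 < \<epsilon>\<^sup>2" "\<epsilon>\<^sup>2 \<le> 1"
    using e power_le_one[of \<epsilon> 2] by auto
  have d: "0 < d" "d \<le> 1/2"
    using e2 unfolding d_def by auto
  have "800 * real n \<le> \<epsilon>\<^sup>2 * real m"
    using m e2 by (simp add: divide_le_eq mult.commute)
  also have "\<dots> \<le> \<epsilon>\<^sup>2 * (2 * real p + 1)"
    unfolding p_def using e2 by (intro mult_left_mono) linarith+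
  finally have dp: "(800 * real n - 1) / 4 \<le> d * real p"
    using e2 unfolding d_def by (simp add: algebra_simps)
  have "(1 - d) ^ p \<le> exp (- d) ^ p"
    using d by (intro power_mono) (auto simp: exp_ge_add_one_self[of "-d", simplified])
  also have "\<dots> = exp (- (d * real p))"
    by (simp add: exp_of_nat_mult[symmetric] mult.commute)
  finally have decay: "(1 - d) ^ p \<le> exp (- (d * real p))" .
  have "(2::real) ^ n \<le> exp 1 ^ n"
    using exp_ge_add_one_self[of 1] by (intro power_mono) auto
  then have growth: "(2::real) ^ n \<le> exp (real n)"
    by (simp add: exp_of_nat_mult[symmetric])
  have "2 ^ n * (1 - d) ^ p \<le> exp (real n) * exp (- (d * real p))"
    using decay growth d by (intro mult_mono) auto
  also have "\<dots> = exp (real n - d * real p)"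
    by (simp add: exp_add[symmetric])
  also have "\<dots> \<le> exp (- 198)"
    using dp n by simp
  also have "\<dots> \<le> 1 / 100"
  proof -
    have "100 \<le> exp (198::real)"
      using exp_ge_add_one_self[of 198] by simp
    then show ?thesis
      by (simp add: exp_minus field_simps)
  qed
  finally show ?thesis
    unfolding d_def p_def .
qed

lemma cut_povm_identifies_cut:
  assumes "0 < \<epsilon>" "\<epsilon> \<le> 1" "800 * real n / \<epsilon>\<^sup>2 \<le> real m"
    and "C \<noteq> {}" "C \<subset> {..<n}" "qstate C a" "qstate ({..<n} - C) b"
    and "eps_far_mp C \<epsilon> a" "eps_far_mp ({..<n} - C) \<epsilon> b"
  shows "let \<psi> = qtensor C ({..<n} - C) a b in
    Re (qform (copies_basis n m) (cut_povm n m C) (tensor_pow \<psi>))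
    + Re (qform (copies_basis n m) (cut_povm n m ({..<n} - C)) (tensor_pow \<psi>)) \<ge> 99 / 100"
proof -
  have "\<epsilon>\<^sup>2 \<le> 1"
    using assms(1,2) by (simp add: power_le_one)
  moreover have "n \<ge> 1"
    using assms(4,5) by (cases n) auto
  ultimately show ?thesis
    using cut_povm_correct_prob[OF assms(4-9), of m] two_pow_mult_decay_le_one_percent[OF assms(1-3)]
    unfolding Let_def by linarith
qed

theorem theorem2p21:
  shows "\<exists>K::real. K > 0 \<and>
    (\<forall>(n::nat) (\<epsilon>::real) (m::nat). 0 < \<epsilon> \<and> \<epsilon> \<le> 1 \<and> real m \<ge> K * real n / \<epsilon>\<^sup>2 \<longrightarrow>
      (\<exists>M :: nat set \<Rightarrow> nat set list \<Rightarrow> nat set list \<Rightarrow> complex.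
         is_povm (copies_basis n m) (Pow {..<n}) M \<and>
         (\<forall>C a b. C \<noteq> {} \<and> C \<subset> {..<n} \<and>
             qstate C a \<and> qstate ({..<n} - C) b \<and>
             eps_far_mp C \<epsilon> a \<and> eps_far_mp ({..<n} - C) \<epsilon> b \<longrightarrow>
             (let \<psi> = qtensor C ({..<n} - C) a b in
               Re (qform (copies_basis n m) (M C) (tensor_pow \<psi>))
             + Re (qform (copies_basis n m) (M ({..<n} - C)) (tensor_pow \<psi>)) \<ge> 99 / 100))))"
  apply (intro exI[of _ 800] conjI allI impI)
   apply simp
  subgoal for n \<epsilon> m
    by (intro exI[of _ "cut_povm n m"] conjI allI impI is_povm_cut_povm cut_povm_identifies_cut) auto
  done

end
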